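(* Let $r,k,m$ be positive integers with $r\neq k$, and let $\alpha>\max\{k,r\}$ be real such that $\alpha-m$ is not a negative integer and $\alpha\neq m+r-j$, $\alpha\ne m+k-j$ for $j=1,\dots,m$. Then $$\sum_{n=1}^\infty\frac{H_{n+\alpha-m}}{(n+r)(n+k)}=\frac{k-\alpha}{k-r}\left\{\frac{H_{\alpha-k}^2+H_{\alpha-k}^{(2)}}{\alpha-k}-\sum_{j=1}^k\frac{H_{\alpha+j-k}}{j(\alpha+j-k)}\right\}+\frac{\alpha-r}{k-r}\left\{\frac{H_{\alpha-r}^2+H_{\alpha-r}^{(2)}}{\alpha-r}-\sum_{j=1}^r\frac{H_{\alpha+j-r}}{j(\alpha+j-r)}\right\}$$ $$-\frac{1}{k-r}\sum_{j=1}^m\left\{\frac{H_{j+\alpha-m}-H_r}{j+\alpha-m-r}-\frac{H_{j+\alpha-m}-H_k}{j+\alpha-m-k}\right\}.$$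
   Context: Shifted harmonic numbers: for a real $\alpha$ that is not a negative integer, $H_\alpha := \sum_{k=1}^\infty\left(\frac1k-\frac1{k+\alpha}\right)$ and, for integers $m\ge 2$, $H_\alpha^{(m)} := \sum_{k=1}^\infty\left(\frac1{k^m}-\frac1{(k+\alpha)^m}\right)=\zeta(m)-\zeta(m,\alpha+1)$, where $\zeta$ is the Riemann zeta function and $\zeta(s,\alpha+1)=\sum_{n=1}^\infty (n+\alpha)^{-s}$ is the Hurwitz zeta function. For nonnegative integers these are the ordinary harmonic numbers. Powers such as $H_\alpha^2$ mean $(H_\alpha)^2$. Empty sums are $0$. *)

theory Defs
  imports "HOL-Analysis.Analysis"
begin

definition shifted_harm :: "real \<Rightarrow> real" where
  "shifted_harm a = (\<Sum>k. 1 / real (Suc k) - 1 / (real (Suc k) + a))"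

definition shifted_harm2 :: "real \<Rightarrow> real" where
  "shifted_harm2 a = (\<Sum>k. 1 / (real (Suc k))^2 - 1 / (real (Suc k) + a)^2)"

end

theory Submission
  imports Defs "HOL-Real_Asymp.Real_Asymp"
begin

text \<open>
  For \<open>c > 0\<close> the nonnegative double series \<open>\<Sum>i,j\<ge>1. c / (i j (i + j + c))\<close> sums row by row to
  \<open>\<Sum>i. H(i+c) (1/i - 1/(i+c))\<close> and diagonal by diagonal (\<open>i + j = M\<close>) to
  \<open>\<Sum>M. 2 H(M-1) (1/M - 1/(M+c))\<close>. With the tails \<open>T n = \<Sum>i>n. 1/i - 1/(i+c)\<close>, for which
  \<open>H(n+c) = H n + T n\<close>, twice the first series minus the second telescopes to
  \<open>T 0\<^sup>2 + (\<Sum>n. 1/n\<^sup>2 - 1/(n+c)\<^sup>2) = H(c)\<^sup>2 + H\<^sub>2(c)\<close>, so both series have this value.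
  Dropping the first \<open>s\<close> terms evaluates \<open>\<Sum>n. H(n+\<alpha>) (1/(n+s) - 1/(n+\<alpha>))\<close>, and the
  corollary follows from the partial fraction decomposition of \<open>H(n+\<alpha>-m) / ((n+r)(n+k))\<close>
  after writing \<open>H(n+\<alpha>) = H(n+\<alpha>-m) + (\<Sum>j=1..m. 1/(n+\<alpha>-m+j))\<close>.
\<close>

lemma summable_bigo_powr:
  fixes f :: "nat \<Rightarrow> real"
  assumes "f \<in> O(\<lambda>n. real n powr s)" and "s < -1"
  shows "summable f"
  by (rule summable_comparison_test_bigo[OF _ assms(1)]) (simp add: summable_real_powr_iff assms(2))

lemma shifted_harm_sums: "(\<lambda>k. 1 / real (Suc k) - 1 / (real (Suc k) + a)) sums shifted_harm a"
proof -
  have "summable (\<lambda>k. 1 / real (Suc k) - 1 / (real (Suc k) + a))"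
    by (rule summable_bigo_powr[where s = "-2"], real_asymp) simp
  then show ?thesis unfolding shifted_harm_def by (rule summable_sums)
qed

lemma shifted_harm2_sums: "(\<lambda>k. 1 / real (Suc k) ^ 2 - 1 / (real (Suc k) + a) ^ 2) sums shifted_harm2 a"
proof -
  have "summable (\<lambda>k. 1 / real (Suc k) ^ 2 - 1 / (real (Suc k) + a) ^ 2)"
    by (rule summable_bigo_powr[where s = "-3"], real_asymp) simp
  then show ?thesis unfolding shifted_harm2_def by (rule summable_sums)
qed

lemma shifted_harm_diff_sums:
  "(\<lambda>k. 1 / (real (Suc k) + a) - 1 / (real (Suc k) + b)) sums (shifted_harm b - shifted_harm a)"
  using sums_diff[OF shifted_harm_sums[of b] shifted_harm_sums[of a]] by simp

lemma shifted_harm_plus_one: "shifted_harm (x + 1) = shifted_harm x + 1 / (x + 1)"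
proof -
  have "(\<lambda>k. 1 / (real (Suc k) + x) - 1 / (real (Suc (Suc k)) + x)) sums (1 / (real (Suc 0) + x) - 0)"
    by (rule telescope_sums'[where f = "\<lambda>k. 1 / (real (Suc k) + x)"]) real_asymp
  moreover have "(\<lambda>k. 1 / (real (Suc k) + x) - 1 / (real (Suc (Suc k)) + x))
                   sums (shifted_harm (x + 1) - shifted_harm x)"
    using shifted_harm_diff_sums[of x "x + 1"] by (simp add: add_ac)
  ultimately show ?thesis using sums_unique2 by (fastforce simp: add.commute)
qed

lemma shifted_harm_plus_nat: "shifted_harm (x + real m) = shifted_harm x + (\<Sum>j=1..m. 1 / (x + real j))"
proof (induction m)
  case (Suc m)
  have "shifted_harm (x + real (Suc m)) = shifted_harm (x + real m) + 1 / (x + real (Suc m))"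
    using shifted_harm_plus_one[of "x + real m"] by (simp add: add_ac)
  then show ?case using Suc by simp
qed simp

lemma shifted_harm_of_nat_plus:
  "shifted_harm (real n + c) =
     harm n + shifted_harm c - (\<Sum>i<n. 1 / real (Suc i) - 1 / (real (Suc i) + c))"
  using shifted_harm_plus_nat[of c n]
  by (simp add: harm_altdef sum_subtractf sum.atLeast1_atMost_eq inverse_eq_divide add.commute)

lemma shifted_harm_div_sums:
  assumes "x > 0"
  shows "(\<lambda>i. 1 / (real (Suc i) * (real (Suc i) + x))) sums (shifted_harm x / x)"
proof -
  have "(1 / y - 1 / (y + x)) / x = 1 / (y * (y + x))" if "y > 0" for y :: real
    using that assms by (simp add: divide_simps; simp add: algebra_simps)
  then show ?thesis
    using sums_divide[OF shifted_harm_sums[of x], of x] by simp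
qed

lemma summable_harm_mult_diff:
  "summable (\<lambda>n. harm n * (1 / real (Suc n) - 1 / (real (Suc n) + c)))"
proof (rule summable_bigo_powr[where s = "-3/2"])
  have harm_le: "harm n \<le> ln (real n) + 1" if "n > 0" for n
    using euler_mascheroni_sequence_decreasing[of 1 n] that by (simp add: harm_def)
  have "eventually (\<lambda>n. norm (harm n * (1 / real (Suc n) - 1 / (real (Suc n) + c)))
      \<le> 1 * norm ((ln (real n) + 1) * (1 / real (Suc n) - 1 / (real (Suc n) + c)))) sequentially"
    using eventually_gt_at_top[of "0::nat"]
    by eventually_elim (auto simp: abs_mult harm_nonneg harm_le intro!: mult_right_mono)
  then have "(\<lambda>n. harm n * (1 / real (Suc n) - 1 / (real (Suc n) + c)))
      \<in> O(\<lambda>n. (ln (real n) + 1) * (1 / real (Suc n) - 1 / (real (Suc n) + c)))"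
    by (rule bigoI)
  also have "(\<lambda>n. (ln (real n) + 1) * (1 / real (Suc n) - 1 / (real (Suc n) + c)))
      \<in> O(\<lambda>n. real n powr (-3/2))"
    by real_asymp
  finally show "(\<lambda>n. harm n * (1 / real (Suc n) - 1 / (real (Suc n) + c)))
      \<in> O(\<lambda>n. real n powr (-3/2))" .
qed simp

lemma sums_rows_if_sums_diagonals:
  fixes g :: "nat \<Rightarrow> nat \<Rightarrow> real"
  assumes nonneg: "\<And>i j. 0 \<le> g i j"
    and rows: "\<And>i. g i sums R i"
    and diagonals: "(\<lambda>M. \<Sum>j\<le>M. g (M - j) j) sums S"
  shows "R sums S"
proof -
  define h where "h q = g (fst q - snd q) (snd q)" for q
  have diagonal: "((\<lambda>j. h (M, j)) has_sum (\<Sum>j\<le>M. g (M - j) j)) {..M}" for M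
    by (simp add: h_def)
  have diagonal_sums: "((\<lambda>M. \<Sum>j\<le>M. g (M - j) j) has_sum S) UNIV"
    by (rule sums_nonneg_imp_has_sum[OF diagonals]) (simp add: sum_nonneg nonneg)
  have "(h has_sum S) (Sigma UNIV atMost)"
  proof (rule has_sum_SigmaI[OF diagonal diagonal_sums])
    show "h summable_on Sigma UNIV atMost"
      by (rule summable_on_SigmaI[OF diagonal has_sum_imp_summable[OF diagonal_sums]])
         (simp add: h_def nonneg)
  qed
  moreover have "(h has_sum S) (Sigma UNIV atMost) \<longleftrightarrow>
      ((\<lambda>q. g (fst q) (snd q)) has_sum S) (Sigma UNIV (\<lambda>_. UNIV))"
    by (rule has_sum_reindex_bij_witness[where j = "\<lambda>q. (fst q - snd q, snd q)"
          and i = "\<lambda>p. (fst p + snd p, snd p)"])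
       (auto simp: h_def)
  ultimately have "((\<lambda>q. g (fst q) (snd q)) has_sum S) (Sigma UNIV (\<lambda>_. UNIV))"
    by blast
  then have "(R has_sum S) UNIV"
    by (rule has_sum_SigmaD) (simp add: sums_nonneg_imp_has_sum[OF rows nonneg])
  then show ?thesis by (rule has_sum_imp_sums)
qed

lemma diagonal_sum_eq_harm:
  fixes c :: real
  assumes "c \<ge> 0"
  shows "(\<Sum>j\<le>M. c / (real (Suc (M - j)) * real (Suc j) * (real (Suc (M - j)) + real (Suc j) + c)))
           = 2 * (1 / real (Suc (Suc M)) - 1 / (real (Suc (Suc M)) + c)) * harm (Suc M)"
proof -
  have split: "c / (p * q * (p + q + c)) = (1 / (p + q) - 1 / (p + q + c)) * (1 / p + 1 / q)"
    if "p > 0" "q > 0" for p q :: real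
    using that assms by (simp add: divide_simps; simp add: algebra_simps)
  have "c / (real (Suc (M - j)) * real (Suc j) * (real (Suc (M - j)) + real (Suc j) + c))
      = (1 / real (Suc (Suc M)) - 1 / (real (Suc (Suc M)) + c)) * (1 / real (Suc (M - j)) + 1 / real (Suc j))"
    if "j \<le> M" for j
  proof -
    have "real (Suc (M - j)) + real (Suc j) = real (Suc (Suc M))"
      using that by (simp add: of_nat_diff)
    then show ?thesis using split[of "real (Suc (M - j))" "real (Suc j)"] by simp
  qed
  then have "(\<Sum>j\<le>M. c / (real (Suc (M - j)) * real (Suc j) * (real (Suc (M - j)) + real (Suc j) + c)))
      = (\<Sum>j\<le>M. (1 / real (Suc (Suc M)) - 1 / (real (Suc (Suc M)) + c))
          * (1 / real (Suc (M - j)) + 1 / real (Suc j)))"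
    by (intro sum.cong) simp_all
  also have "\<dots> = (1 / real (Suc (Suc M)) - 1 / (real (Suc (Suc M)) + c))
          * ((\<Sum>j\<le>M. 1 / real (Suc (M - j))) + (\<Sum>j\<le>M. 1 / real (Suc j)))"
    by (simp only: sum_distrib_left[symmetric] sum.distrib)
  also have "(\<Sum>j\<le>M. 1 / real (Suc (M - j))) = (\<Sum>j\<le>M. 1 / real (Suc j))"
    using sum.nat_diff_reindex[of "\<lambda>k. 1 / real (Suc k)" "Suc M"] by (simp add: lessThan_Suc_atMost)
  also have "(\<Sum>j\<le>M. 1 / real (Suc j)) = harm (Suc M)"
    by (simp add: harm_altdef lessThan_Suc_atMost inverse_eq_divide)
  finally show ?thesis by simp
qed

lemma shifted_harm_mult_diff_sums:
  fixes c :: real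
  assumes c: "c > 0"
  shows "(\<lambda>n. shifted_harm (real (Suc n) + c) * (1 / real (Suc n) - 1 / (real (Suc n) + c)))
           sums (shifted_harm c ^ 2 + shifted_harm2 c)"
proof -
  define a where "a n = 1 / real (Suc n) - 1 / (real (Suc n) + c)" for n
  define R where "R n = shifted_harm (real (Suc n) + c) * a n" for n
  define E where "E n = 2 * a n * harm n" for n
  define T where "T n = shifted_harm c - (\<Sum>i<n. a i)" for n
  \<comment> \<open>\<open>R\<close> and \<open>E\<close> are the row and diagonal sums of the double series;
    \<open>T n\<close> is the tail \<open>\<Sum>i\<ge>n. a i\<close>.\<close>
  have E_sums: "E sums suminf E"
    unfolding E_def using summable_mult[OF summable_harm_mult_diff[of c], of 2]
    by (intro summable_sums) (simp add: a_def mult_ac)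
  have R_sums: "R sums suminf E"
  proof (rule sums_rows_if_sums_diagonals)
    define g where "g i j = c / (real (Suc i) * real (Suc j) * (real (Suc i) + real (Suc j) + c))" for i j
    show "0 \<le> g i j" for i j
      using c by (simp add: g_def)
    show "g i sums R i" for i
    proof -
      have "(\<lambda>j. c / real (Suc i) * (1 / (real (Suc j) * (real (Suc j) + (real (Suc i) + c)))))
          sums (c / real (Suc i) * (shifted_harm (real (Suc i) + c) / (real (Suc i) + c)))"
        by (intro sums_mult shifted_harm_div_sums) (use c in simp)
      moreover have "c / real (Suc i) * (shifted_harm (real (Suc i) + c) / (real (Suc i) + c)) = R i"
        using c by (simp add: R_def a_def field_simps)
      moreover have "c / real (Suc i) * (1 / (real (Suc j) * (real (Suc j) + (real (Suc i) + c)))) = g i j" for j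
        by (simp add: g_def add_ac)
      ultimately show ?thesis
        by simp
    qed
    have "E 0 = 0"
      by (simp add: E_def harm_def)
    then have "(\<lambda>M. E (Suc M)) sums suminf E"
      using E_sums sums_Suc_iff[of E] by simp
    moreover have "(\<Sum>j\<le>M. g (M - j) j) = E (Suc M)" for M
      unfolding g_def E_def a_def using diagonal_sum_eq_harm[of c M] c by simp
    ultimately show "(\<lambda>M. \<Sum>j\<le>M. g (M - j) j) sums suminf E"
      by simp
  qed
  have "(\<lambda>n. 2 * R n - E n) sums (shifted_harm c ^ 2 + shifted_harm2 c)"
  proof -
    have "T \<longlonglongrightarrow> shifted_harm c - shifted_harm c"
      unfolding T_def using shifted_harm_sums[of c]
      by (intro tendsto_intros) (simp add: sums_def a_def)
    then have "(\<lambda>n. T n ^ 2) \<longlonglongrightarrow> 0"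
      using tendsto_power[of T 0 sequentially 2] by simp
    then have "(\<lambda>n. T n ^ 2 - T (Suc n) ^ 2) sums (shifted_harm c ^ 2)"
      using telescope_sums' by (fastforce simp: T_def)
    moreover have "2 * R n - E n = (T n ^ 2 - T (Suc n) ^ 2)
        + (1 / real (Suc n) ^ 2 - 1 / (real (Suc n) + c) ^ 2)" for n
    proof -
      have R: "R n = (harm n + 1 / real (Suc n) + T (Suc n)) * a n"
        using shifted_harm_of_nat_plus[of "Suc n" c]
        by (simp add: R_def T_def a_def harm_Suc inverse_eq_divide add_ac)
      have T: "T n = T (Suc n) + a n"
        by (simp add: T_def)
      have identity: "2 * ((h + u + t) * (u - v)) - 2 * (u - v) * h = ((t + (u - v)) ^ 2 - t ^ 2) + (u ^ 2 - v ^ 2)"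
        for h u t v :: real
        by algebra
      show ?thesis
        using identity[of "harm n" "1 / real (Suc n)" "T (Suc n)" "1 / (real (Suc n) + c)"]
        by (subst R, subst T) (simp only: E_def a_def power_one_over)
    qed
    ultimately show ?thesis
      using sums_add[OF _ shifted_harm2_sums[of c]] by simp
  qed
  moreover have "(\<lambda>n. 2 * R n - E n) sums (2 * suminf E - suminf E)"
    by (intro sums_diff sums_mult R_sums E_sums)
  ultimately have "suminf E = shifted_harm c ^ 2 + shifted_harm2 c"
    using sums_unique2 by fastforce
  with R_sums have "R sums (shifted_harm c ^ 2 + shifted_harm2 c)"
    by simp
  then show ?thesis
    unfolding R_def[abs_def] a_def .
qed

lemma shifted_harm_mult_diff_sums_shifted:
  fixes s :: nat and \<alpha> :: real
  assumes "\<alpha> > real s"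
  shows "(\<lambda>n. shifted_harm (real (Suc n) + \<alpha>) * (1 / (real (Suc n) + real s) - 1 / (real (Suc n) + \<alpha>)))
    sums ((\<alpha> - real s) * ((shifted_harm (\<alpha> - real s) ^ 2 + shifted_harm2 (\<alpha> - real s)) / (\<alpha> - real s)
          - (\<Sum>j=1..s. shifted_harm (\<alpha> + real j - real s) / (real j * (\<alpha> + real j - real s)))))"
proof -
  define c where "c = \<alpha> - real s"
  have c: "c > 0"
    using assms by (simp add: c_def)
  define R where "R n = shifted_harm (real (Suc n) + c) * (1 / real (Suc n) - 1 / (real (Suc n) + c))" for n
  have "(\<lambda>n. R (n + s)) sums (shifted_harm c ^ 2 + shifted_harm2 c - (\<Sum>n<s. R n))"
    using sums_iff_shift[of R s] shifted_harm_mult_diff_sums[OF c] by (simp add: R_def[abs_def])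
  moreover have "R (n + s) = shifted_harm (real (Suc n) + \<alpha>) * (1 / (real (Suc n) + real s) - 1 / (real (Suc n) + \<alpha>))"
    for n
    by (simp add: R_def c_def add_ac)
  moreover have "(\<Sum>n<s. R n)
      = c * (\<Sum>j=1..s. shifted_harm (\<alpha> + real j - real s) / (real j * (\<alpha> + real j - real s)))"
  proof -
    have R_eq: "R n = c * (shifted_harm (real (Suc n) + c) / (real (Suc n) * (real (Suc n) + c)))" for n
      using c by (simp add: R_def field_simps)
    have shift: "\<alpha> + real j - real s = real j + c" for j
      by (simp add: c_def)
    show ?thesis
      by (simp only: R_eq shift sum_bounds_lt_plus1[symmetric] sum_distrib_left)
  qed
  ultimately show ?thesis
    using c by (simp add: c_def right_diff_distrib)
qed

lemma shifted_harm_partial_fractions: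
  fixes y \<alpha> :: real and r k m :: nat
  assumes y: "y > 0" and "r \<noteq> k"
    and "\<And>j. j \<in> {1..m} \<Longrightarrow> y + (real j + \<alpha> - real m) \<noteq> 0"
    and "\<And>j. j \<in> {1..m} \<Longrightarrow> real j + \<alpha> - real m \<noteq> real r"
    and "\<And>j. j \<in> {1..m} \<Longrightarrow> real j + \<alpha> - real m \<noteq> real k"
  shows "shifted_harm (y + \<alpha> - real m) / ((y + real r) * (y + real k)) =
    1 / (real k - real r) *
      (shifted_harm (y + \<alpha>) * (1 / (y + real r) - 1 / (y + \<alpha>))
       - shifted_harm (y + \<alpha>) * (1 / (y + real k) - 1 / (y + \<alpha>))
       - (\<Sum>j=1..m. (1 / (y + real r) - 1 / (y + (real j + \<alpha> - real m))) / (real j + \<alpha> - real m - real r)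
                   - (1 / (y + real k) - 1 / (y + (real j + \<alpha> - real m))) / (real j + \<alpha> - real m - real k)))"
proof -
  define S where "S = (\<Sum>j=1..m. 1 / (y + (real j + \<alpha> - real m)))"
  have shift: "shifted_harm (y + \<alpha>) = shifted_harm (y + \<alpha> - real m) + S"
    using shifted_harm_plus_nat[of "y + \<alpha> - real m" m] by (simp add: S_def algebra_simps)
  have "(1 / (y + real s) - 1 / (y + t)) / (t - real s) = 1 / (y + t) * (1 / (y + real s))"
    if "y + t \<noteq> 0" "t \<noteq> real s" for s :: nat and t :: real
    using that y by (simp add: divide_simps; simp add: algebra_simps)
  then have sum: "(\<Sum>j=1..m. (1 / (y + real r) - 1 / (y + (real j + \<alpha> - real m))) / (real j + \<alpha> - real m - real r)
                   - (1 / (y + real k) - 1 / (y + (real j + \<alpha> - real m))) / (real j + \<alpha> - real m - real k))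
      = S * (1 / (y + real r) - 1 / (y + real k))"
    unfolding S_def sum_distrib_right using assms by (intro sum.cong) (simp_all add: right_diff_distrib)
  have decomposition: "P / ((y + real r) * (y + real k)) = 1 / (real k - real r) *
      ((P + S) * (1 / (y + real r) - 1 / (y + \<alpha>)) - (P + S) * (1 / (y + real k) - 1 / (y + \<alpha>))
        - S * (1 / (y + real r) - 1 / (y + real k)))" for P
    using y \<open>r \<noteq> k\<close> by (simp add: divide_simps; simp add: algebra_simps)
  show ?thesis
    unfolding shift sum by (rule decomposition)
qed

theorem corollary2p3:
  fixes r k m :: nat and \<alpha> :: real
  assumes "r > 0" "k > 0" "m > 0" "r \<noteq> k"
    and "\<alpha> > real (max k r)"
    and "\<forall>j::nat. j > 0 \<longrightarrow> \<alpha> - real m \<noteq> - real j"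
    and "\<forall>j\<in>{1..m}. \<alpha> \<noteq> real m + real r - real j"
    and "\<forall>j\<in>{1..m}. \<alpha> \<noteq> real m + real k - real j"
  shows "(\<lambda>n. shifted_harm (real (Suc n) + \<alpha> - real m)
                / ((real (Suc n) + real r) * (real (Suc n) + real k)))
    sums
      ((real k - \<alpha>) / (real k - real r) *
         ((shifted_harm (\<alpha> - real k) ^ 2 + shifted_harm2 (\<alpha> - real k)) / (\<alpha> - real k)
          - (\<Sum>j=1..k. shifted_harm (\<alpha> + real j - real k) / (real j * (\<alpha> + real j - real k))))
     + (\<alpha> - real r) / (real k - real r) *
         ((shifted_harm (\<alpha> - real r) ^ 2 + shifted_harm2 (\<alpha> - real r)) / (\<alpha> - real r)
          - (\<Sum>j=1..r. shifted_harm (\<alpha> + real j - real r) / (real j * (\<alpha> + real j - real r))))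
     - 1 / (real k - real r) *
         (\<Sum>j=1..m. (shifted_harm (real j + \<alpha> - real m) - shifted_harm (real r))
                        / (real j + \<alpha> - real m - real r)
                   - (shifted_harm (real j + \<alpha> - real m) - shifted_harm (real k))
                        / (real j + \<alpha> - real m - real k)))"
proof -
  have "\<alpha> > real r" "\<alpha> > real k"
    using assms(5) by auto
  define t where "t j = real j + \<alpha> - real m" for j
  define B where "B s = (shifted_harm (\<alpha> - real s) ^ 2 + shifted_harm2 (\<alpha> - real s)) / (\<alpha> - real s)
          - (\<Sum>j=1..s. shifted_harm (\<alpha> + real j - real s) / (real j * (\<alpha> + real j - real s)))" for s
  define X where "X s n = shifted_harm (real (Suc n) + \<alpha>) * (1 / (real (Suc n) + real s) - 1 / (real (Suc n) + \<alpha>))"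
    for s n
  define Y where "Y s j n = (1 / (real (Suc n) + real s) - 1 / (real (Suc n) + t j)) / (t j - real s)" for s j n
  define W where "W = (\<Sum>j=1..m. (shifted_harm (t j) - shifted_harm (real r)) / (t j - real r)
                  - (shifted_harm (t j) - shifted_harm (real k)) / (t j - real k))"
  have "(\<lambda>n. 1 / (real k - real r) * (X r n - X k n - (\<Sum>j=1..m. Y r j n - Y k j n)))
    sums (1 / (real k - real r) * ((\<alpha> - real r) * B r - (\<alpha> - real k) * B k - W))"
    unfolding X_def Y_def B_def W_def
    by (intro sums_mult sums_diff sums_sum sums_divide shifted_harm_mult_diff_sums_shifted
        shifted_harm_diff_sums) fact+
  moreover have "1 / (real k - real r) * ((\<alpha> - real r) * B r - (\<alpha> - real k) * B k - W)
    = (real k - \<alpha>) / (real k - real r) * B k + (\<alpha> - real r) / (real k - real r) * B r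
      - 1 / (real k - real r) * W"
    by (simp add: diff_divide_distrib algebra_simps)
  moreover have "shifted_harm (real (Suc n) + \<alpha> - real m) / ((real (Suc n) + real r) * (real (Suc n) + real k))
      = 1 / (real k - real r) * (X r n - X k n - (\<Sum>j=1..m. Y r j n - Y k j n))" for n
    unfolding X_def Y_def t_def
  proof (rule shifted_harm_partial_fractions)
    show "real (Suc n) + (real j + \<alpha> - real m) \<noteq> 0" for j
      using assms(6)[rule_format, of "Suc n + j"] by auto
  qed (use assms(4,7,8) in \<open>force+\<close>)
  ultimately show ?thesis
    unfolding B_def W_def t_def by simp
qed

end
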